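(* The free commutative unitary Rota--Baxter algebra $\text{Ш}(x)$ of weight $1$ generated by $x$ is a Hopf algebra $(\text{Ш}(x),\diamond,\mu,\Delta,\epsilon,S)$, where: (1) $\diamond$ is the augmented mixable shuffle product; (2) $\mu:\mathbf k\to\text{Ш}(x)$, $c\mapsto c$; (3) for every sequence $(a,\alpha_1,\dots,\alpha_k)$ of nonnegative integers, $$\Delta\big(x^{\otimes(a,\alpha_1,\dots,\alpha_k)}\big)=\sum_{i=0}^k\sum_{p=0}^a\binom{a}{p}\,x^{\otimes(p,\alpha_1,\dots,\alpha_i)}\otimes x^{\otimes(a-p,\alpha_{i+1},\dots,\alpha_k)};$$ (4) $\epsilon$ is the $\mathbf k$-linear map with $\epsilon(w)=\delta_{1,w}$ for each basis element $w=x^{\otimes(a,\alpha_1,\dots,\alpha_k)}$ (i.e. $\epsilon(w)=1$ if $w=1=x^0\in\mathbf k[x]$ and $0$ otherwise); (5) the antipode is $$S\big(x^{\otimes(a,\alpha_1,\dots,\alpha_k)}\big)=(-1)^{a+k}x^a\otimes\sum_{(i_1,\dots,i_r)\models k}x^{\otimes(\alpha_k+\cdots+\alpha_{k-i_1+1},\,\dots,\,\alpha_{i_r}+\cdots+\alpha_1)},$$ where the inner sequence is obtained from $(\alpha_k,\alpha_{k-1},\dots,\alpha_1)$ by summing consecutive blocks of sizes $i_1,\dots,i_r$.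
   Context: $\mathbf{k}$ is a commutative ring containing $\mathbb{Q}$. For a sequence $\gamma=(\gamma_0,\dots,\gamma_k)$ of nonnegative integers, $x^{\otimes\gamma}=x^{\gamma_0}\otimes\cdots\otimes x^{\gamma_k}$; conventions: $x^{\otimes(p,\alpha_1,\dots,\alpha_i)}=x^p$ when $i=0$, and $x^{\otimes(a-p,\alpha_{i+1},\dots,\alpha_k)}=x^{a-p}$ when $i=k$. $\text{Ш}^+(x)=\bigoplus_{k\ge0}\mathbf k[x]^{\otimes k}$ (with $\mathbf k[x]^{\otimes0}=\mathbf k$) carries the mixable shuffle product of weight 1: $1*\mathfrak a=\mathfrak a*1=\mathfrak a$, $(a_1\otimes\mathfrak a')*(b_1\otimes\mathfrak b')=a_1\otimes(\mathfrak a'*(b_1\otimes\mathfrak b'))+b_1\otimes((a_1\otimes\mathfrak a')*\mathfrak b')+(a_1b_1)\otimes(\mathfrak a'*\mathfrak b')$. $\text{Ш}(x)=\mathbf k[x]\otimes\text{Ш}^+(x)=\bigoplus_{k\ge1}\mathbf k[x]^{\otimes k}$ with the augmented mixable shuffle product $(a_0\otimes\mathfrak a)\diamond(b_0\otimes\mathfrak b)=(a_0b_0)\otimes(\mathfrak a*\mathfrak b)$ (writing $a_0\otimes1=a_0$) and Rota--Baxter operator $\mathfrak a\mapsto1\otimes\mathfrak a$; it is the free commutative unitary Rota--Baxter algebra of weight 1 on $x$. A composition $(i_1,\dots,i_r)\models k$ is a sequence of positive integers summing to $k$ (for $k=0$ only the empty one). *)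

theory Defs
  imports Main "HOL-Library.Poly_Mapping" "HOL-Library.Multiset"
begin

text \<open>A free k-module with basis 'b is modelled as the finitely supported
functions 'b =>0 'k.  Tensor products of free modules are free modules on
the product of the bases.\<close>

definition pm_smult :: "'k::comm_ring_1 \<Rightarrow> ('b \<Rightarrow>\<^sub>0 'k) \<Rightarrow> ('b \<Rightarrow>\<^sub>0 'k)" where
  "pm_smult c f = Poly_Mapping.map (\<lambda>x. c * x) f"

definition lin :: "('b \<Rightarrow> ('c \<Rightarrow>\<^sub>0 'k::comm_ring_1)) \<Rightarrow> ('b \<Rightarrow>\<^sub>0 'k) \<Rightarrow> ('c \<Rightarrow>\<^sub>0 'k)" where
  "lin F f = (\<Sum>u\<in>Poly_Mapping.keys f. pm_smult (Poly_Mapping.lookup f u) (F u))"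

definition bilin :: "('b \<Rightarrow> 'c \<Rightarrow> ('d \<Rightarrow>\<^sub>0 'k::comm_ring_1)) \<Rightarrow> ('b \<Rightarrow>\<^sub>0 'k) \<Rightarrow> ('c \<Rightarrow>\<^sub>0 'k) \<Rightarrow> ('d \<Rightarrow>\<^sub>0 'k)" where
  "bilin F f g = (\<Sum>u\<in>Poly_Mapping.keys f. \<Sum>v\<in>Poly_Mapping.keys g.
      pm_smult (Poly_Mapping.lookup f u * Poly_Mapping.lookup g v) (F u v))"

definition tens :: "('b \<Rightarrow>\<^sub>0 'k::comm_ring_1) \<Rightarrow> ('c \<Rightarrow>\<^sub>0 'k) \<Rightarrow> ('b \<times> 'c \<Rightarrow>\<^sub>0 'k)" where
  "tens f g = bilin (\<lambda>u v. Poly_Mapping.single (u, v) 1) f g"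

definition tmap :: "('b \<Rightarrow> ('d \<Rightarrow>\<^sub>0 'k::comm_ring_1)) \<Rightarrow> ('c \<Rightarrow> ('e \<Rightarrow>\<^sub>0 'k)) \<Rightarrow> ('b \<times> 'c \<Rightarrow>\<^sub>0 'k) \<Rightarrow> ('d \<times> 'e \<Rightarrow>\<^sub>0 'k)" where
  "tmap F G = lin (\<lambda>(u, v). tens (F u) (G v))"

definition mset_pm :: "'b multiset \<Rightarrow> ('b \<Rightarrow>\<^sub>0 'k::comm_ring_1)" where
  "mset_pm M = (\<Sum>w\<in>set_mset M. Poly_Mapping.single w (of_nat (count M w)))"

text \<open>A basis element x^{\<otimes>(a, \<alpha>_1,...,\<alpha>_k)} of Sha(x) = k[x]^{\<otimes>(k+1)}
is represented by the pair (a, [\<alpha>_1,...,\<alpha>_k]).  A basis element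
x^{\<alpha>_1} \<otimes> ... \<otimes> x^{\<alpha>_k} of Sha^+(x) is represented by the list
[\<alpha>_1,...,\<alpha>_k] (the empty list being 1 \<in> k).\<close>

type_synonym sha_word = "nat \<times> nat list"

text \<open>Mixable shuffle product of weight 1 of basis elements of Sha^+(x),
as a multiset of basis elements (all coefficients are nonnegative integers).\<close>
fun msh :: "nat list \<Rightarrow> nat list \<Rightarrow> nat list multiset" where
  "msh [] ys = {#ys#}"
| "msh xs [] = {#xs#}"
| "msh (a # as) (b # bs) =
     image_mset ((#) a) (msh as (b # bs))
   + image_mset ((#) b) (msh (a # as) bs)
   + image_mset ((#) (a + b)) (msh as bs)"

definition sha_mult_basis :: "sha_word \<Rightarrow> sha_word \<Rightarrow> (sha_word \<Rightarrow>\<^sub>0 'k::comm_ring_1)" where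
  "sha_mult_basis u v = mset_pm (image_mset (\<lambda>\<gamma>. (fst u + fst v, \<gamma>)) (msh (snd u) (snd v)))"

definition sha_mult :: "(sha_word \<Rightarrow>\<^sub>0 'k::comm_ring_1) \<Rightarrow> (sha_word \<Rightarrow>\<^sub>0 'k) \<Rightarrow> (sha_word \<Rightarrow>\<^sub>0 'k)"
  (infixl \<open>\<diamondop>\<close> 70) where
  "f \<diamondop> g = bilin sha_mult_basis f g"

definition sha_unit :: "'k::comm_ring_1 \<Rightarrow> (sha_word \<Rightarrow>\<^sub>0 'k)" where
  "sha_unit c = Poly_Mapping.single (0, []) c"

definition sha_coprod_basis :: "sha_word \<Rightarrow> (sha_word \<times> sha_word \<Rightarrow>\<^sub>0 'k::comm_ring_1)" where
  "sha_coprod_basis w = (case w of (a, \<alpha>) \<Rightarrow>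
     (\<Sum>i\<in>{0..length \<alpha>}. \<Sum>p\<in>{0..a}.
        Poly_Mapping.single ((p, take i \<alpha>), (a - p, drop i \<alpha>)) (of_nat (a choose p))))"

definition sha_coprod :: "(sha_word \<Rightarrow>\<^sub>0 'k::comm_ring_1) \<Rightarrow> (sha_word \<times> sha_word \<Rightarrow>\<^sub>0 'k)" where
  "sha_coprod = lin sha_coprod_basis"

definition sha_counit_basis :: "sha_word \<Rightarrow> 'k::comm_ring_1" where
  "sha_counit_basis w = (if w = (0, []) then 1 else 0)"

definition sha_counit :: "(sha_word \<Rightarrow>\<^sub>0 'k::comm_ring_1) \<Rightarrow> 'k" where
  "sha_counit f = (\<Sum>u\<in>Poly_Mapping.keys f. Poly_Mapping.lookup f u * sha_counit_basis u)"

definition compositions :: "nat \<Rightarrow> nat list set" where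
  "compositions k = {c. (\<forall>i\<in>set c. 0 < i) \<and> sum_list c = k}"

fun block_sums :: "nat list \<Rightarrow> nat list \<Rightarrow> nat list" where
  "block_sums [] ys = []"
| "block_sums (i # is) ys = sum_list (take i ys) # block_sums is (drop i ys)"

definition sha_antipode_basis :: "sha_word \<Rightarrow> (sha_word \<Rightarrow>\<^sub>0 'k::comm_ring_1)" where
  "sha_antipode_basis w = (case w of (a, \<alpha>) \<Rightarrow>
     pm_smult ((-1) ^ (a + length \<alpha>))
       (\<Sum>c\<in>compositions (length \<alpha>). Poly_Mapping.single (a, block_sums c (rev \<alpha>)) 1))"

definition sha_antipode :: "(sha_word \<Rightarrow>\<^sub>0 'k::comm_ring_1) \<Rightarrow> (sha_word \<Rightarrow>\<^sub>0 'k)" where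
  "sha_antipode = lin sha_antipode_basis"

definition tens_mult_basis :: "('b \<Rightarrow> 'b \<Rightarrow> ('b \<Rightarrow>\<^sub>0 'k::comm_ring_1)) \<Rightarrow> 'b \<times> 'b \<Rightarrow> 'b \<times> 'b \<Rightarrow> ('b \<times> 'b \<Rightarrow>\<^sub>0 'k)" where
  "tens_mult_basis M x y = tens (M (fst x) (fst y)) (M (snd x) (snd y))"

definition assoc_iso :: "(('b \<times> 'b) \<times> 'b \<Rightarrow>\<^sub>0 'k::comm_ring_1) \<Rightarrow> ('b \<times> ('b \<times> 'b) \<Rightarrow>\<^sub>0 'k)" where
  "assoc_iso = lin (\<lambda>((u, v), w). Poly_Mapping.single (u, (v, w)) 1)"

definition is_hopf_algebra ::
  "('b \<Rightarrow> 'b \<Rightarrow> ('b \<Rightarrow>\<^sub>0 'k::comm_ring_1)) \<Rightarrow> ('b \<Rightarrow>\<^sub>0 'k) \<Rightarrow>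
   ('b \<Rightarrow> ('b \<times> 'b \<Rightarrow>\<^sub>0 'k)) \<Rightarrow> ('b \<Rightarrow> 'k) \<Rightarrow> ('b \<Rightarrow> ('b \<Rightarrow>\<^sub>0 'k)) \<Rightarrow> bool" where
  "is_hopf_algebra M e D E S \<longleftrightarrow>
    (let m = bilin M; \<Delta> = lin D; \<epsilon> = (\<lambda>f. \<Sum>u\<in>Poly_Mapping.keys f. Poly_Mapping.lookup f u * E u);
         u = (\<lambda>c. pm_smult c e); S' = lin S; id' = (\<lambda>w. Poly_Mapping.single w 1) in
      \<comment> \<open>algebra\<close>
      (\<forall>f g h. m (m f g) h = m f (m g h)) \<and>
      (\<forall>f. m e f = f \<and> m f e = f) \<and>
      \<comment> \<open>coalgebra\<close>
      (\<forall>f. assoc_iso (tmap D id' (\<Delta> f)) = tmap id' D (\<Delta> f)) \<and>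
      (\<forall>f. lin (\<lambda>(v, w). pm_smult (E v) (id' w)) (\<Delta> f) = f \<and>
           lin (\<lambda>(v, w). pm_smult (E w) (id' v)) (\<Delta> f) = f) \<and>
      \<comment> \<open>compatibility: \<Delta> and \<epsilon> are algebra morphisms\<close>
      (\<forall>f g. \<Delta> (m f g) = bilin (tens_mult_basis M) (\<Delta> f) (\<Delta> g)) \<and>
      \<Delta> e = tens e e \<and>
      (\<forall>f g. \<epsilon> (m f g) = \<epsilon> f * \<epsilon> g) \<and>
      \<epsilon> e = 1 \<and>
      \<comment> \<open>antipode\<close>
      (\<forall>f. lin (\<lambda>(v, w). m (S v) (id' w)) (\<Delta> f) = u (\<epsilon> f) \<and>
           lin (\<lambda>(v, w). m (id' v) (S w)) (\<Delta> f) = u (\<epsilon> f)))"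

end

theory Submission
  imports Defs
begin

text \<open>Both the product and the coproduct split along \<open>Sha(x) = k[x] \<otimes> Sha\<^sup>+(x)\<close>: on basis
  words \<open>(a, \<alpha>)\<close> the product multiplies the powers of \<open>x\<close> and mixably shuffles the tails, while the
  coproduct is the binomial coproduct of \<open>x\<^sup>a\<close> tensored with deconcatenation of \<open>\<alpha>\<close>.
  Each bialgebra axiom therefore reduces to a binomial identity (Vandermonde's, or
  \<open>C(a,p) C(p,q) = C(a,q) C(a-q,p-q)\<close>) together with a statement about multisets of words:
  associativity of the mixable shuffle, and compatibility of deconcatenation with it.
  For the antipode, splitting off the first block of every coarsening in
  \<open>\<Sum>\<^sub>i (-1)\<^sup>i coarsenings (rev (take i \<alpha>)) \<cdot> drop i \<alpha>\<close> by the recursion of the mixable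
  shuffle makes the sum telescope to zero for \<open>\<alpha> \<noteq> []\<close>; the mirror identity follows by reversing
  words, and on the polynomial factor \<open>\<Sum>\<^sub>p (-1)\<^sup>p C(a,p)\<close> vanishes for \<open>a > 0\<close>.\<close>

lemma lookup_pm_smult [simp]: "Poly_Mapping.lookup (pm_smult c f) k = c * Poly_Mapping.lookup f k"
  unfolding pm_smult_def by (simp add: Poly_Mapping.map.rep_eq when_def)

lemma pm_smult_add_right: "pm_smult c (f + g) = pm_smult c f + pm_smult c g"
  by (rule poly_mapping_eqI) (simp add: lookup_add algebra_simps)

lemma pm_smult_add_left: "pm_smult (c + d) f = pm_smult c f + pm_smult d f"
  by (rule poly_mapping_eqI) (simp add: lookup_add algebra_simps)

lemma pm_smult_pm_smult [simp]: "pm_smult c (pm_smult d f) = pm_smult (c * d) f"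
  by (rule poly_mapping_eqI) (simp add: algebra_simps)

lemma pm_smult_one [simp]: "pm_smult 1 f = f"
  by (rule poly_mapping_eqI) simp

lemma pm_smult_zero_left [simp]: "pm_smult 0 f = 0"
  by (rule poly_mapping_eqI) simp

lemma pm_smult_zero_right [simp]: "pm_smult c 0 = 0"
  by (rule poly_mapping_eqI) simp

lemma pm_smult_minus_left: "pm_smult (- c) f = - pm_smult c f"
  by (rule poly_mapping_eqI) simp

lemma pm_smult_single [simp]: "pm_smult c (Poly_Mapping.single k d) = Poly_Mapping.single k (c * d)"
  by (rule poly_mapping_eqI) (simp add: lookup_single when_def)

lemma pm_smult_sum_right: "pm_smult c (sum f A) = (\<Sum>x\<in>A. pm_smult c (f x))"
  by (rule poly_mapping_eqI) (simp add: lookup_sum sum_distrib_left)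

lemma pm_smult_sum_left: "pm_smult (sum f A) g = (\<Sum>x\<in>A. pm_smult (f x) g)"
  by (rule poly_mapping_eqI) (simp add: lookup_sum sum_distrib_right)

lemma lin_superset:
  assumes "finite S" "Poly_Mapping.keys f \<subseteq> S"
  shows "lin F f = (\<Sum>u\<in>S. pm_smult (Poly_Mapping.lookup f u) (F u))"
  unfolding lin_def
  by (rule sum.mono_neutral_left) (use assms in \<open>auto simp: in_keys_iff\<close>)

lemma lin_add: "lin F (f + g) = lin F f + lin F g"
proof -
  let ?S = "Poly_Mapping.keys f \<union> Poly_Mapping.keys g"
  have "lin F (f + g) = (\<Sum>u\<in>?S. pm_smult (Poly_Mapping.lookup (f + g) u) (F u))"
    by (rule lin_superset) (auto simp: keys_add)
  also have "\<dots> = (\<Sum>u\<in>?S. pm_smult (Poly_Mapping.lookup f u) (F u))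
                 + (\<Sum>u\<in>?S. pm_smult (Poly_Mapping.lookup g u) (F u))"
    by (simp add: lookup_add pm_smult_add_left sum.distrib)
  also have "\<dots> = lin F f + lin F g"
    by (subst (1 2) lin_superset[where S = ?S]) auto
  finally show ?thesis .
qed

lemma lin_zero [simp]: "lin F 0 = 0"
  by (simp add: lin_def)

lemma lin_smult: "lin F (pm_smult c f) = pm_smult c (lin F f)"
proof -
  have "lin F (pm_smult c f) =
      (\<Sum>u\<in>Poly_Mapping.keys f. pm_smult (Poly_Mapping.lookup (pm_smult c f) u) (F u))"
    by (rule lin_superset) (auto simp: in_keys_iff)
  then show ?thesis by (simp add: lin_def pm_smult_sum_right)
qed

lemma lin_sum: "lin F (sum g A) = (\<Sum>x\<in>A. lin F (g x))"
  by (induction A rule: infinite_finite_induct) (auto simp: lin_add)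

lemma lin_single [simp]: "lin F (Poly_Mapping.single u c) = pm_smult c (F u)"
  by (cases "c = 0") (simp_all add: lin_def)

lemma lin_cong: "(\<And>u. u \<in> Poly_Mapping.keys f \<Longrightarrow> F u = G u) \<Longrightarrow> lin F f = lin G f"
  unfolding lin_def by simp

lemma lin_fun_add: "lin (\<lambda>u. F u + G u) f = lin F f + lin G f"
  unfolding lin_def by (simp add: pm_smult_add_right sum.distrib)

lemma lin_fun_smult: "lin (\<lambda>u. pm_smult c (F u)) f = pm_smult c (lin F f)"
  unfolding lin_def by (simp add: pm_smult_sum_right mult.commute)

lemma lin_fun_sum: "lin (\<lambda>u. \<Sum>x\<in>A. F x u) f = (\<Sum>x\<in>A. lin (F x) f)"
  unfolding lin_def by (simp add: pm_smult_sum_right sum.swap[of _ A])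

lemma lin_comp: "lin G (lin F f) = lin (\<lambda>u. lin G (F u)) f"
  by (simp add: lin_def[of F] lin_sum lin_smult) (simp add: lin_def)

lemma lin_id [simp]: "lin (\<lambda>u. Poly_Mapping.single u 1) f = f"
proof (rule poly_mapping_eqI)
  fix k
  have "Poly_Mapping.lookup (lin (\<lambda>u. Poly_Mapping.single u 1) f) k =
      (\<Sum>u\<in>Poly_Mapping.keys f. Poly_Mapping.lookup f u when u = k)"
    by (simp add: lin_def lookup_sum lookup_single)
  also have "\<dots> = Poly_Mapping.lookup f k"
    by (cases "k \<in> Poly_Mapping.keys f") (auto simp: when_def in_keys_iff)
  finally show "Poly_Mapping.lookup (lin (\<lambda>u. Poly_Mapping.single u 1) f) k = Poly_Mapping.lookup f k" .
qed

lemma bilin_lin: "bilin F f g = lin (\<lambda>u. lin (F u) g) f"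
  unfolding bilin_def lin_def by (simp add: pm_smult_sum_right)

lemma lin_swap: "lin (\<lambda>u. lin (\<lambda>v. F u v) g) f = lin (\<lambda>v. lin (\<lambda>u. F u v) f) g"
  unfolding lin_def
  by (simp add: pm_smult_sum_right sum.swap[of _ "Poly_Mapping.keys f"] mult.commute)

lemma bilin_smult_left: "bilin M (pm_smult c f) g = pm_smult c (bilin M f g)"
  by (simp add: bilin_lin lin_smult)

lemma bilin_smult_right: "bilin M f (pm_smult c g) = pm_smult c (bilin M f g)"
  by (simp add: bilin_lin lin_smult lin_fun_smult)

lemma bilin_assoc_of_basis:
  assumes "\<And>u v t. lin (\<lambda>w. M w t) (M u v) = lin (M u) (M v t)"
  shows "bilin M (bilin M f g) h = bilin M f (bilin M g h)"
proof -
  have "bilin M (bilin M f g) h = lin (\<lambda>u. lin (\<lambda>v. lin (\<lambda>t. lin (\<lambda>w. M w t) (M u v)) h) g) f"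
    by (simp add: bilin_lin lin_comp) (subst lin_swap, rule refl)
  also have "\<dots> = lin (\<lambda>u. lin (\<lambda>v. lin (\<lambda>t. lin (M u) (M v t)) h) g) f"
    by (simp add: assms)
  also have "\<dots> = bilin M f (bilin M g h)"
    by (simp add: bilin_lin lin_comp)
  finally show ?thesis .
qed

lemma lin_bilin_of_basis:
  assumes "\<And>u v. lin D (M u v) = bilin N (D u) (D v)"
  shows "lin D (bilin M f g) = bilin N (lin D f) (lin D g)"
proof -
  have "lin D (bilin M f g) = lin (\<lambda>u. lin (\<lambda>v. bilin N (D u) (D v)) g) f"
    by (simp add: bilin_lin lin_comp assms)
  also have "\<dots> = lin (\<lambda>u. lin (\<lambda>x. lin (\<lambda>v. lin (N x) (D v)) g) (D u)) f"
    by (simp add: bilin_lin) (subst lin_swap, rule refl)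
  also have "\<dots> = bilin N (lin D f) (lin D g)"
    by (simp add: bilin_lin lin_comp)
  finally show ?thesis .
qed

definition lin_form :: "('b \<Rightarrow> 'k::comm_ring_1) \<Rightarrow> ('b \<Rightarrow>\<^sub>0 'k) \<Rightarrow> 'k" where
  "lin_form E f = (\<Sum>u\<in>Poly_Mapping.keys f. Poly_Mapping.lookup f u * E u)"

lemma lin_form_superset:
  assumes "finite S" "Poly_Mapping.keys f \<subseteq> S"
  shows "lin_form E f = (\<Sum>u\<in>S. Poly_Mapping.lookup f u * E u)"
  unfolding lin_form_def
  by (rule sum.mono_neutral_left) (use assms in \<open>auto simp: in_keys_iff\<close>)

lemma lin_form_add: "lin_form E (f + g) = lin_form E f + lin_form E g"
proof -
  let ?S = "Poly_Mapping.keys f \<union> Poly_Mapping.keys g"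
  have "lin_form E (f + g) = (\<Sum>u\<in>?S. Poly_Mapping.lookup (f + g) u * E u)"
    by (rule lin_form_superset) (auto simp: keys_add)
  also have "\<dots> = (\<Sum>u\<in>?S. Poly_Mapping.lookup f u * E u) + (\<Sum>u\<in>?S. Poly_Mapping.lookup g u * E u)"
    by (simp add: lookup_add distrib_right sum.distrib)
  also have "\<dots> = lin_form E f + lin_form E g"
    by (subst (1 2) lin_form_superset[where S = ?S]) auto
  finally show ?thesis .
qed

lemma lin_form_zero [simp]: "lin_form E 0 = 0"
  by (simp add: lin_form_def)

lemma lin_form_smult: "lin_form E (pm_smult c f) = c * lin_form E f"
proof -
  have "lin_form E (pm_smult c f) =
      (\<Sum>u\<in>Poly_Mapping.keys f. Poly_Mapping.lookup (pm_smult c f) u * E u)"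
    by (rule lin_form_superset) (auto simp: in_keys_iff)
  then show ?thesis by (simp add: lin_form_def sum_distrib_left mult.assoc)
qed

lemma lin_form_sum: "lin_form E (sum g A) = (\<Sum>x\<in>A. lin_form E (g x))"
  by (induction A rule: infinite_finite_induct) (auto simp: lin_form_add)

lemma lin_form_single [simp]: "lin_form E (Poly_Mapping.single u c) = c * E u"
  by (cases "c = 0") (simp_all add: lin_form_def)

lemma lin_form_lin: "lin_form E (lin F f) = lin_form (\<lambda>u. lin_form E (F u)) f"
  by (simp add: lin_def lin_form_sum lin_form_smult) (simp add: lin_form_def)

lemma lin_form_fun_mult_left: "lin_form (\<lambda>u. c * F u) f = c * lin_form F f"
  unfolding lin_form_def by (simp add: sum_distrib_left mult_ac)

lemma lin_form_fun_mult_right: "lin_form (\<lambda>u. F u * c) f = lin_form F f * c"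
  unfolding lin_form_def by (simp add: sum_distrib_right mult.assoc)

lemma pm_smult_lin_form: "pm_smult (lin_form E f) g = lin (\<lambda>w. pm_smult (E w) g) f"
  unfolding lin_form_def lin_def by (simp add: pm_smult_sum_left)

lemma lin_form_bilin_of_basis:
  assumes "\<And>u v. lin_form E (M u v) = E u * E v"
  shows "lin_form E (bilin M f g) = lin_form E f * lin_form E g"
  by (simp add: bilin_lin lin_form_lin assms lin_form_fun_mult_left lin_form_fun_mult_right)

lemma tens_lin: "tens f g = lin (\<lambda>u. lin (\<lambda>v. Poly_Mapping.single (u, v) 1) g) f"
  by (simp add: tens_def bilin_lin)

lemma tens_single_right: "tens f (Poly_Mapping.single v c) = lin (\<lambda>u. Poly_Mapping.single (u, v) c) f"
  by (simp add: tens_lin)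

lemma tens_single_left: "tens (Poly_Mapping.single u c) g = lin (\<lambda>v. Poly_Mapping.single (u, v) c) g"
  by (simp add: tens_lin lin_fun_smult[symmetric])

lemma tmap_lin: "tmap F G (lin H f) = lin (\<lambda>w. tmap F G (H w)) f"
  by (simp add: tmap_def lin_comp)

lemma assoc_iso_lin: "assoc_iso (lin H f) = lin (\<lambda>w. assoc_iso (H w)) f"
  by (simp add: assoc_iso_def lin_comp)

lemma sum_alternating_telescope:
  fixes A :: "nat \<Rightarrow> ('b \<Rightarrow>\<^sub>0 'k::comm_ring_1)"
  shows "(\<Sum>i\<in>{0..k}. pm_smult ((-1) ^ i) (A i + A (Suc i))) = A 0 + pm_smult ((-1) ^ k) (A (Suc k))"
proof (induction k)
  case (Suc k)
  then show ?case by (simp add: pm_smult_add_right pm_smult_minus_left)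
qed simp


definition mbind :: "'a multiset \<Rightarrow> ('a \<Rightarrow> 'b multiset) \<Rightarrow> 'b multiset" where
  "mbind M f = sum_mset (image_mset f M)"

lemma mbind_empty [simp]: "mbind {#} f = {#}"
  by (simp add: mbind_def)

lemma mbind_single [simp]: "mbind {#x#} f = f x"
  by (simp add: mbind_def)

lemma mbind_add [simp]: "mbind (M + N) f = mbind M f + mbind N f"
  by (simp add: mbind_def)

lemma mbind_image [simp]: "mbind (image_mset g M) f = mbind M (\<lambda>x. f (g x))"
  by (induction M) (simp_all add: mbind_def)

lemma image_mbind: "mbind M (\<lambda>x. image_mset h (f x)) = image_mset h (mbind M f)"
  by (induction M) (simp_all add: mbind_def)

lemma mbind_fun_add [simp]: "mbind M (\<lambda>x. f x + g x) = mbind M f + mbind M g"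
  by (induction M) (simp_all add: mbind_def)

lemma mbind_add_mset [simp]: "mbind M (\<lambda>x. add_mset (f x) (g x)) = image_mset f M + mbind M g"
  by (induction M) (simp_all add: mbind_def)

lemma mbind_fun_empty [simp]: "mbind M (\<lambda>x. {#}) = {#}"
  by (induction M) (simp_all add: mbind_def)

lemma mbind_fun_single [simp]: "mbind M (\<lambda>x. {#f x#}) = image_mset f M"
  by (induction M) (simp_all add: mbind_def)

lemma image_mset_sum: "image_mset h (sum f A) = (\<Sum>x\<in>A. image_mset h (f x))"
  by (induction A rule: infinite_finite_induct) auto

definition mprod :: "'a multiset \<Rightarrow> 'b multiset \<Rightarrow> ('a \<times> 'b) multiset" where
  "mprod M N = mbind M (\<lambda>x. image_mset (Pair x) N)"

lemma mprod_single [simp]: "mprod {#u#} N = image_mset (Pair u) N"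
  by (simp add: mprod_def)

lemma mprod_add [simp]: "mprod (M + M') N = mprod M N + mprod M' N"
  by (simp add: mprod_def)

lemma mprod_image_left: "mprod (image_mset h M) N = image_mset (apfst h) (mprod M N)"
  by (simp add: mprod_def image_mbind[symmetric] image_mset.compositionality o_def)

lemma mprod_image: "mprod (image_mset f M) (image_mset g N) = image_mset (map_prod f g) (mprod M N)"
  by (simp add: mprod_def image_mbind[symmetric] image_mset.compositionality o_def)

lemma mset_pm_conv_sum_mset:
  "(mset_pm M :: 'a \<Rightarrow>\<^sub>0 'k::comm_ring_1) = sum_mset (image_mset (\<lambda>x. Poly_Mapping.single x 1) M)"
proof (rule poly_mapping_eqI)
  fix k :: 'a
  have "Poly_Mapping.lookup (sum_mset (image_mset (\<lambda>x. Poly_Mapping.single x (1::'k)) N)) k =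
      of_nat (count N k)" for N
    by (induction N) (auto simp: lookup_add lookup_single when_def)
  moreover have "Poly_Mapping.lookup (mset_pm M :: 'a \<Rightarrow>\<^sub>0 'k) k =
      (\<Sum>w\<in>set_mset M. (of_nat (count M w) :: 'k) when w = k)"
    by (simp add: mset_pm_def lookup_sum lookup_single)
  moreover have "\<dots> = of_nat (count M k)"
    by (cases "k \<in># M") (auto simp: when_def not_in_iff)
  ultimately show "Poly_Mapping.lookup (mset_pm M :: 'a \<Rightarrow>\<^sub>0 'k) k =
      Poly_Mapping.lookup (sum_mset (image_mset (\<lambda>x. Poly_Mapping.single x (1::'k)) M)) k"
    by simp
qed

lemma mset_pm_add [simp]: "mset_pm (M + N) = mset_pm M + mset_pm N"
  by (simp add: mset_pm_conv_sum_mset)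

lemma mset_pm_empty [simp]: "mset_pm {#} = 0"
  by (simp add: mset_pm_conv_sum_mset)

lemma mset_pm_single [simp]: "mset_pm {#x#} = Poly_Mapping.single x 1"
  by (simp add: mset_pm_conv_sum_mset)

lemma mset_pm_add_mset [simp]: "mset_pm (add_mset x M) = Poly_Mapping.single x 1 + mset_pm M"
  by (simp add: mset_pm_conv_sum_mset)

lemma mset_pm_sum: "mset_pm (sum f A) = (\<Sum>x\<in>A. mset_pm (f x))"
  by (induction A rule: infinite_finite_induct) auto

lemma mset_pm_mbind: "mset_pm (mbind M f) = sum_mset (image_mset (\<lambda>x. mset_pm (f x)) M)"
  by (induction M) (simp_all add: mbind_def)

lemma lin_mset_pm: "lin F (mset_pm M) = sum_mset (image_mset F M)"
  by (induction M) (simp_all add: lin_add)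

lemma lin_form_mset_pm: "lin_form F (mset_pm M) = sum_mset (image_mset F M)"
  by (induction M) (simp_all add: lin_form_add)

lemma tens_mset_pm: "tens (mset_pm M) (mset_pm N) = mset_pm (mprod M N)"
  unfolding tens_lin lin_mset_pm mprod_def mset_pm_mbind
  by (simp add: mset_pm_conv_sum_mset image_mset.compositionality o_def)

lemma sum_mset_image_sum:
  "sum_mset (image_mset (\<lambda>x. \<Sum>t\<in>A. f t x) N) = (\<Sum>t\<in>A. sum_mset (image_mset (f t) N))"
  by (induction N) (auto simp: sum.distrib)

lemma sum_mset_image_pm_smult:
  "sum_mset (image_mset (\<lambda>x. pm_smult c (g x)) N) = pm_smult c (sum_mset (image_mset g N))"
  by (induction N) (auto simp: pm_smult_add_right)

lemma sum_nested_triangle: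
  "(\<Sum>i\<in>{0..n::nat}. \<Sum>j\<in>{0..i}. g i j) = (\<Sum>j\<in>{0..n}. \<Sum>i\<in>{0..n - j}. g (j + i) j)"
proof -
  have "(\<Sum>i\<in>{0..n}. \<Sum>j\<in>{0..i}. g i j) = (\<Sum>(i, j)\<in>(SIGMA i:{0..n}. {0..i}). g i j)"
    by (rule sum.Sigma) auto
  also have "\<dots> = (\<Sum>(j, i)\<in>(SIGMA j:{0..n}. {0..n - j}). g (j + i) j)"
    by (rule sum.reindex_bij_witness[of _ "\<lambda>(j, i). (j + i, j)" "\<lambda>(i, j). (j, i - j)"]) auto
  also have "\<dots> = (\<Sum>j\<in>{0..n}. \<Sum>i\<in>{0..n - j}. g (j + i) j)"
    by (rule sum.Sigma[symmetric]) auto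
  finally show ?thesis .
qed

lemma sum_nested_triangle2:
  "(\<Sum>i\<in>{0..k::nat}. \<Sum>p\<in>{0..a::nat}. \<Sum>j\<in>{0..i}. \<Sum>q\<in>{0..p}. g i p j q) =
   (\<Sum>j\<in>{0..k}. \<Sum>q\<in>{0..a}. \<Sum>i\<in>{0..k - j}. \<Sum>r\<in>{0..a - q}. g (j + i) (q + r) j q)"
proof -
  have "(\<Sum>i\<in>{0..k}. \<Sum>p\<in>{0..a}. \<Sum>j\<in>{0..i}. \<Sum>q\<in>{0..p}. g i p j q) =
      (\<Sum>i\<in>{0..k}. \<Sum>j\<in>{0..i}. \<Sum>p\<in>{0..a}. \<Sum>q\<in>{0..p}. g i p j q)"
    by (rule sum.cong[OF refl], rule sum.swap)
  also have "\<dots> = (\<Sum>j\<in>{0..k}. \<Sum>i\<in>{0..k - j}. \<Sum>p\<in>{0..a}. \<Sum>q\<in>{0..p}. g (j + i) p j q)"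
    by (rule sum_nested_triangle)
  also have "\<dots> = (\<Sum>j\<in>{0..k}. \<Sum>i\<in>{0..k - j}. \<Sum>q\<in>{0..a}. \<Sum>r\<in>{0..a - q}. g (j + i) (q + r) j q)"
    by (rule sum.cong[OF refl], rule sum.cong[OF refl], rule sum_nested_triangle)
  also have "\<dots> = (\<Sum>j\<in>{0..k}. \<Sum>q\<in>{0..a}. \<Sum>i\<in>{0..k - j}. \<Sum>r\<in>{0..a - q}. g (j + i) (q + r) j q)"
    by (rule sum.cong[OF refl], rule sum.swap)
  finally show ?thesis .
qed

lemma sum_swap4:
  "(\<Sum>p\<in>A. \<Sum>q\<in>B. \<Sum>i\<in>C. \<Sum>j\<in>D. f p q i j) = (\<Sum>j\<in>D. \<Sum>q\<in>B. \<Sum>i\<in>C. \<Sum>p\<in>A. f p q i j)"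
proof -
  have "(\<Sum>p\<in>A. \<Sum>q\<in>B. \<Sum>i\<in>C. \<Sum>j\<in>D. f p q i j) = (\<Sum>p\<in>A. \<Sum>q\<in>B. \<Sum>j\<in>D. \<Sum>i\<in>C. f p q i j)"
    by (rule sum.cong[OF refl], rule sum.cong[OF refl], rule sum.swap)
  also have "\<dots> = (\<Sum>p\<in>A. \<Sum>j\<in>D. \<Sum>q\<in>B. \<Sum>i\<in>C. f p q i j)"
    by (rule sum.cong[OF refl], rule sum.swap)
  also have "\<dots> = (\<Sum>j\<in>D. \<Sum>p\<in>A. \<Sum>q\<in>B. \<Sum>i\<in>C. f p q i j)"
    by (rule sum.swap)
  also have "\<dots> = (\<Sum>j\<in>D. \<Sum>q\<in>B. \<Sum>p\<in>A. \<Sum>i\<in>C. f p q i j)"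
    by (rule sum.cong[OF refl], rule sum.swap)
  also have "\<dots> = (\<Sum>j\<in>D. \<Sum>q\<in>B. \<Sum>i\<in>C. \<Sum>p\<in>A. f p q i j)"
    by (rule sum.cong[OF refl], rule sum.cong[OF refl], rule sum.swap)
  finally show ?thesis .
qed

lemma sum_binomial_convolution:
  fixes G :: "nat \<Rightarrow> ('b \<Rightarrow>\<^sub>0 'k::comm_ring_1)"
  shows "(\<Sum>p\<in>{0..a}. \<Sum>q\<in>{0..b}. pm_smult (of_nat ((a choose p) * (b choose q))) (G (p + q))) =
         (\<Sum>s\<in>{0..a + b}. pm_smult (of_nat ((a + b) choose s)) (G s))"
proof -
  let ?g = "\<lambda>p q. pm_smult (of_nat ((a choose p) * (b choose q))) (G (p + q))"
  have "(\<Sum>s\<in>{0..a + b}. pm_smult (of_nat ((a + b) choose s)) (G s)) = (\<Sum>s\<le>a + b. \<Sum>p\<le>s. ?g p (s - p))"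
    by (simp add: atLeast0AtMost vandermonde[symmetric] of_nat_sum pm_smult_sum_left)
  also have "\<dots> = (\<Sum>(p, q)\<in>{(i, j). i + j \<le> a + b}. ?g p q)"
    by (rule sum.triangle_reindex_eq[symmetric])
  also have "\<dots> = (\<Sum>(p, q)\<in>{0..a} \<times> {0..b}. ?g p q)"
  proof (rule sum.mono_neutral_right)
    show "finite {(i, j). i + j \<le> a + b}"
      by (rule finite_subset[of _ "{0..a + b} \<times> {0..a + b}"]) auto
    show "\<forall>pq\<in>{(i, j). i + j \<le> a + b} - {0..a} \<times> {0..b}. (case pq of (p, q) \<Rightarrow> ?g p q) = 0"
    proof
      fix pq assume "pq \<in> {(i, j). i + j \<le> a + b} - {0..a} \<times> {0..b}"
      then obtain p q where "pq = (p, q)" "a < p \<or> b < q"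
        by (cases pq) (auto simp: not_le)
      then show "(case pq of (p, q) \<Rightarrow> ?g p q) = 0"
        by (auto simp: binomial_eq_0)
    qed
  qed auto
  also have "\<dots> = (\<Sum>p\<in>{0..a}. \<Sum>q\<in>{0..b}. ?g p q)"
    by (simp add: sum.cartesian_product)
  finally show ?thesis by simp
qed

lemma sum_binomial_alternating:
  "(\<Sum>p\<in>{0..a}. of_nat (a choose p) * (-1) ^ p) = (if a = 0 then 1 else (0 :: 'k::comm_ring_1))"
  using choose_alternating_sum[of a, where 'a = 'k] by (simp add: atLeast0AtMost mult.commute)

lemma sum_binomial_alternating':
  "(\<Sum>p\<in>{0..a}. of_nat (a choose p) * (-1) ^ (a - p)) = (if a = 0 then 1 else (0 :: 'k::comm_ring_1))"
proof -
  have "(\<Sum>p\<in>{0..a}. of_nat (a choose p) * (-1) ^ (a - p)) =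
      (\<Sum>p\<in>{0..a}. of_nat (a choose (a - p)) * ((-1) ^ (a - (a - p)) :: 'k))"
    by (subst sum.atLeastAtMost_rev) simp
  also have "\<dots> = (\<Sum>p\<in>{0..a}. of_nat (a choose p) * (-1) ^ p)"
    by (intro sum.cong refl) (auto simp: binomial_symmetric[symmetric])
  finally show ?thesis by (simp add: sum_binomial_alternating)
qed

section \<open>The mixable shuffle of words\<close>

lemma msh_Nil_right [simp]: "msh xs [] = {#xs#}"
  by (cases xs) auto

lemma msh_Nil_left_fun: "msh [] = (\<lambda>ys. {#ys#})"
  by (rule ext) simp

lemma Nil_in_msh_iff: "[] \<in># msh xs ys \<longleftrightarrow> xs = [] \<and> ys = []"
  by (cases xs; cases ys) auto

lemma msh_commute: "msh xs ys = msh ys xs"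
proof (induction xs ys rule: msh.induct)
  case (1 ys)
  then show ?case by (cases ys) auto
qed (simp_all add: add_ac)

lemma msh_assoc: "mbind (msh xs ys) (\<lambda>\<gamma>. msh \<gamma> zs) = mbind (msh ys zs) (msh xs)"
proof (induction "length xs + length ys + length zs" arbitrary: xs ys zs rule: less_induct)
  case less
  define L where "L xs ys zs = mbind (msh xs ys) (\<lambda>\<gamma>. msh \<gamma> zs)" for xs ys zs
  define R where "R xs ys zs = mbind (msh ys zs) (msh xs)" for xs ys zs
  show ?case
  proof (cases "xs = [] \<or> ys = [] \<or> zs = []")
    case True
    then show ?thesis by (auto simp: msh_Nil_left_fun)
  next
    case False
    then obtain a x b y c z where xyz: "xs = a # x" "ys = b # y" "zs = c # z"
      by (meson list.exhaust)
    have IH: "L u v w = R u v w" if "length u + length v + length w < length xs + length ys + length zs"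
      for u v w
      using less that unfolding L_def R_def by blast
    \<comment> \<open>Both sides expand into the seven ways of choosing which of the three leading letters merge.\<close>
    have "L (a # x) (b # y) (c # z) =
        image_mset ((#) a) (L x (b # y) (c # z)) + image_mset ((#) b) (L (a # x) y (c # z)) +
        image_mset ((#) (a + b)) (L x y (c # z)) + image_mset ((#) c) (L (a # x) (b # y) z) +
        image_mset ((#) (a + c)) (L x (b # y) z) + image_mset ((#) (b + c)) (L (a # x) y z) +
        image_mset ((#) (a + b + c)) (L x y z)"
      unfolding L_def by (simp add: image_mbind add_ac)
    also have "\<dots> =
        image_mset ((#) a) (R x (b # y) (c # z)) + image_mset ((#) b) (R (a # x) y (c # z)) +
        image_mset ((#) (a + b)) (R x y (c # z)) + image_mset ((#) c) (R (a # x) (b # y) z) +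
        image_mset ((#) (a + c)) (R x (b # y) z) + image_mset ((#) (b + c)) (R (a # x) y z) +
        image_mset ((#) (a + b + c)) (R x y z)"
      by (subst (1 2 3 4 5 6 7) IH) (auto simp: xyz)
    also have "\<dots> = R (a # x) (b # y) (c # z)"
      unfolding R_def by (simp add: image_mbind add_ac)
    finally show ?thesis by (simp add: L_def R_def xyz)
  qed
qed

lemma msh_snoc:
  "msh (xs @ [a]) (ys @ [b]) = image_mset (\<lambda>\<gamma>. \<gamma> @ [a]) (msh xs (ys @ [b]))
     + image_mset (\<lambda>\<gamma>. \<gamma> @ [b]) (msh (xs @ [a]) ys) + image_mset (\<lambda>\<gamma>. \<gamma> @ [a + b]) (msh xs ys)"
proof (induction "length xs + length ys" arbitrary: xs ys rule: less_induct)
  case less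
  show ?case
  proof (cases xs)
    case Nil
    then show ?thesis
      using less[of "[]" "tl ys"]
      by (cases ys) (simp_all add: image_mset.compositionality o_def add_ac)
  next
    case (Cons c x)
    then show ?thesis
      using less[of x "[]"] less[of x ys] less[of xs "tl ys"] less[of x "tl ys"]
      by (cases ys) (simp_all add: image_mset.compositionality o_def add_ac)
  qed
qed

lemma msh_rev: "msh (rev xs) (rev ys) = image_mset rev (msh xs ys)"
  by (induction xs ys rule: msh.induct) (simp_all add: msh_snoc image_mset.compositionality o_def)


section \<open>Deconcatenation is compatible with the mixable shuffle\<close>

definition deconcat :: "'a list \<Rightarrow> ('a list \<times> 'a list) multiset" where
  "deconcat \<gamma> = (\<Sum>i\<in>{0..length \<gamma>}. {#(take i \<gamma>, drop i \<gamma>)#})"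

lemma sum_atLeast0_atMost_Suc_shift: "(\<Sum>i\<in>{0..Suc n}. f i) = f 0 + (\<Sum>i\<in>{0..n}. f (Suc i))"
  using sum.atLeast0_atMost_Suc_shift[of f n] by (simp only: o_def)

lemma deconcat_Cons: "deconcat (a # \<gamma>) = {#([], a # \<gamma>)#} + image_mset (apfst ((#) a)) (deconcat \<gamma>)"
  unfolding deconcat_def length_Cons sum_atLeast0_atMost_Suc_shift by (simp add: image_mset_sum)

definition msh_split :: "nat list \<Rightarrow> nat list \<Rightarrow> nat \<Rightarrow> nat \<Rightarrow> (nat list \<times> nat list) multiset" where
  "msh_split \<alpha> \<beta> i j = mprod (msh (take i \<alpha>) (take j \<beta>)) (msh (drop i \<alpha>) (drop j \<beta>))"

lemma mbind_msh_deconcat_Cons: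
  "mbind (msh (a # x) (b # y)) deconcat = image_mset (Pair []) (msh (a # x) (b # y))
     + image_mset (apfst ((#) a)) (mbind (msh x (b # y)) deconcat)
     + image_mset (apfst ((#) b)) (mbind (msh (a # x) y) deconcat)
     + image_mset (apfst ((#) (a + b))) (mbind (msh x y) deconcat)"
  by (simp add: deconcat_Cons image_mbind image_mset.compositionality o_def add_ac)

lemma sum_msh_split_Cons:
  fixes x y :: "nat list"
  defines "S \<equiv> \<lambda>\<alpha> \<beta>. \<Sum>i\<in>{0..length \<alpha>}. \<Sum>j\<in>{0..length \<beta>}. msh_split \<alpha> \<beta> i j"
  shows "S (a # x) (b # y) = image_mset (Pair []) (msh (a # x) (b # y))
     + image_mset (apfst ((#) a)) (S x (b # y)) + image_mset (apfst ((#) b)) (S (a # x) y)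
     + image_mset (apfst ((#) (a + b))) (S x y)"
proof -
  let ?F = "msh_split (a # x) (b # y)"
  have split_Cons: "S (a # x) (b # y) = ?F 0 0 + (\<Sum>j\<in>{0..length y}. ?F 0 (Suc j))
      + (\<Sum>i\<in>{0..length x}. ?F (Suc i) 0) + (\<Sum>i\<in>{0..length x}. \<Sum>j\<in>{0..length y}. ?F (Suc i) (Suc j))"
    "S x (b # y) = (\<Sum>i\<in>{0..length x}. msh_split x (b # y) i 0)
      + (\<Sum>i\<in>{0..length x}. \<Sum>j\<in>{0..length y}. msh_split x (b # y) i (Suc j))"
    "S (a # x) y = (\<Sum>j\<in>{0..length y}. msh_split (a # x) y 0 j)
      + (\<Sum>i\<in>{0..length x}. \<Sum>j\<in>{0..length y}. msh_split (a # x) y (Suc i) j)"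
    unfolding S_def length_Cons sum_atLeast0_atMost_Suc_shift by (simp_all add: sum.distrib add_ac)
  have "?F 0 0 = image_mset (Pair []) (msh (a # x) (b # y))"
    "?F 0 (Suc j) = image_mset (apfst ((#) b)) (msh_split (a # x) y 0 j)"
    "?F (Suc i) 0 = image_mset (apfst ((#) a)) (msh_split x (b # y) i 0)"
    "?F (Suc i) (Suc j) = image_mset (apfst ((#) a)) (msh_split x (b # y) i (Suc j))
        + image_mset (apfst ((#) b)) (msh_split (a # x) y (Suc i) j)
        + image_mset (apfst ((#) (a + b))) (msh_split x y i j)" for i j
    by (simp_all add: msh_split_def mprod_image_left image_mset.compositionality o_def)
  then show ?thesis
    unfolding split_Cons by (simp add: sum.distrib image_mset_sum S_def add_ac)
qed

lemma mbind_msh_deconcat: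
  "mbind (msh \<alpha> \<beta>) deconcat = (\<Sum>i\<in>{0..length \<alpha>}. \<Sum>j\<in>{0..length \<beta>}. msh_split \<alpha> \<beta> i j)"
proof (induction "length \<alpha> + length \<beta>" arbitrary: \<alpha> \<beta> rule: less_induct)
  case less
  show ?case
  proof (cases "\<alpha> = [] \<or> \<beta> = []")
    case True
    then show ?thesis
      by (auto simp: deconcat_def msh_split_def msh_Nil_left_fun)
  next
    case False
    then obtain a x b y where xy: "\<alpha> = a # x" "\<beta> = b # y"
      by (meson list.exhaust)
    show ?thesis
      unfolding xy mbind_msh_deconcat_Cons sum_msh_split_Cons
      by (subst (1 2 3) less) (auto simp: xy)
  qed
qed

section \<open>Coarsenings and the antipode of the mixable shuffle algebra\<close>

lemma length_le_sum_list_pos: "(\<forall>i\<in>set c. 0 < (i::nat)) \<Longrightarrow> length c \<le> sum_list c"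
  by (induction c) auto

lemma finite_compositions: "finite (compositions n)"
proof (rule finite_subset)
  show "compositions n \<subseteq> {xs. set xs \<subseteq> {0..n} \<and> length xs \<le> n}"
    unfolding compositions_def using length_le_sum_list_pos member_le_sum_list by fastforce
  show "finite {xs. set xs \<subseteq> {0..n::nat} \<and> length xs \<le> n}"
    by (rule finite_lists_length_le) simp
qed

lemma compositions_0: "compositions 0 = {[]}"
proof (intro set_eqI iffI)
  fix c assume "c \<in> compositions 0"
  then show "c \<in> {[]}" by (cases c) (auto simp: compositions_def)
qed (simp add: compositions_def)

lemma compositions_pos:
  "0 < n \<Longrightarrow> compositions n = (\<lambda>(j, c). j # c) ` (SIGMA j:{1..n}. compositions (n - j))"
  unfolding compositions_def
  by (rule set_eqI, case_tac x) (auto simp: image_iff)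

lemma compositions_rev: "rev ` compositions n = compositions n"
  unfolding compositions_def by (auto intro: image_eqI[of _ rev "rev _"])

lemma block_sums_append:
  "block_sums (c @ d) \<gamma> = block_sums c \<gamma> @ block_sums d (drop (sum_list c) \<gamma>)"
  by (induction c arbitrary: \<gamma>) (auto simp: add.commute)

lemma block_sums_take: "sum_list c \<le> n \<Longrightarrow> block_sums c (take n \<gamma>) = block_sums c \<gamma>"
  by (induction c arbitrary: \<gamma> n) (auto simp: min_def drop_take)

lemma rev_block_sums:
  "sum_list c = length \<beta> \<Longrightarrow> rev (block_sums c \<beta>) = block_sums (rev c) (rev \<beta>)"
proof (induction c arbitrary: \<beta>)
  case (Cons i c)
  then have sum_c: "sum_list c = length \<beta> - i" and i: "i \<le> length \<beta>"
    by auto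
  have "block_sums (rev c) (rev (drop i \<beta>)) = block_sums (rev c) (rev \<beta>)"
    using sum_c block_sums_take[of "rev c" "length \<beta> - i" "rev \<beta>"] by (simp add: rev_drop)
  moreover have "drop (sum_list c) (rev \<beta>) = rev (take i \<beta>)"
    using sum_c rev_take[of i \<beta>] by simp
  ultimately show ?case
    using Cons i by (simp add: block_sums_append)
qed simp

text \<open>The antipode is \<open>S (a, \<alpha>) = (-1)^(a + length \<alpha>) x^a \<otimes> coarsenings (rev \<alpha>)\<close>.\<close>

definition coarsenings :: "nat list \<Rightarrow> (nat list \<Rightarrow>\<^sub>0 'k::comm_ring_1)" where
  "coarsenings \<beta> = (\<Sum>c\<in>compositions (length \<beta>). Poly_Mapping.single (block_sums c \<beta>) 1)"

definition pm_cons :: "nat \<Rightarrow> (nat list \<Rightarrow>\<^sub>0 'k::comm_ring_1) \<Rightarrow> (nat list \<Rightarrow>\<^sub>0 'k)" where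
  "pm_cons s X = lin (\<lambda>\<gamma>. Poly_Mapping.single (s # \<gamma>) 1) X"

definition pm_rev :: "(nat list \<Rightarrow>\<^sub>0 'k::comm_ring_1) \<Rightarrow> (nat list \<Rightarrow>\<^sub>0 'k)" where
  "pm_rev X = lin (\<lambda>\<gamma>. Poly_Mapping.single (rev \<gamma>) 1) X"

definition mshuffle :: "(nat list \<Rightarrow>\<^sub>0 'k::comm_ring_1) \<Rightarrow> (nat list \<Rightarrow>\<^sub>0 'k) \<Rightarrow> (nat list \<Rightarrow>\<^sub>0 'k)" where
  "mshuffle X Y = bilin (\<lambda>x y. mset_pm (msh x y)) X Y"

lemma coarsenings_Nil [simp]: "coarsenings [] = Poly_Mapping.single [] 1"
  by (simp add: coarsenings_def compositions_0)

lemma pm_cons_single [simp]: "pm_cons s (Poly_Mapping.single x c) = Poly_Mapping.single (s # x) c"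
  by (simp add: pm_cons_def)

lemma pm_cons_sum: "pm_cons s (sum f A) = (\<Sum>a\<in>A. pm_cons s (f a))"
  by (simp add: pm_cons_def lin_sum)

lemma pm_cons_lin: "pm_cons s (lin F X) = lin (\<lambda>x. pm_cons s (F x)) X"
  by (simp add: pm_cons_def lin_comp)

lemma pm_cons_mset_pm: "pm_cons s (mset_pm M) = mset_pm (image_mset ((#) s) M)"
  unfolding pm_cons_def lin_mset_pm by (simp add: mset_pm_conv_sum_mset image_mset.compositionality o_def)

lemma pm_rev_single [simp]: "pm_rev (Poly_Mapping.single \<gamma> c) = Poly_Mapping.single (rev \<gamma>) c"
  by (simp add: pm_rev_def)

lemma pm_rev_pm_rev [simp]: "pm_rev (pm_rev X) = X"
  by (simp add: pm_rev_def lin_comp)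

lemma pm_rev_sum: "pm_rev (sum f A) = (\<Sum>a\<in>A. pm_rev (f a))"
  by (simp add: pm_rev_def lin_sum)

lemma pm_rev_smult: "pm_rev (pm_smult c X) = pm_smult c (pm_rev X)"
  by (simp add: pm_rev_def lin_smult)

lemma pm_rev_mset_pm: "pm_rev (mset_pm M) = mset_pm (image_mset rev M)"
  unfolding pm_rev_def lin_mset_pm by (simp add: mset_pm_conv_sum_mset image_mset.compositionality o_def)

lemma coarsenings_Cons_blocks:
  assumes "\<beta> \<noteq> []"
  shows "(coarsenings \<beta> :: nat list \<Rightarrow>\<^sub>0 'k::comm_ring_1) =
    (\<Sum>j\<in>{1..length \<beta>}. pm_cons (sum_list (take j \<beta>)) (coarsenings (drop j \<beta>)))"
proof -
  let ?C = "SIGMA j:{1..length \<beta>}. compositions (length \<beta> - j)"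
  have inj: "inj_on (\<lambda>(j, c). j # c) ?C"
    by (auto simp: inj_on_def)
  have "compositions (length \<beta>) = (\<lambda>(j, c). j # c) ` ?C"
    using assms by (simp add: compositions_pos)
  then have "(coarsenings \<beta> :: nat list \<Rightarrow>\<^sub>0 'k) =
      (\<Sum>jc\<in>?C. Poly_Mapping.single (block_sums ((\<lambda>(j, c). j # c) jc) \<beta>) 1)"
    unfolding coarsenings_def by (simp only: sum.reindex[OF inj] o_def)
  also have "\<dots> = (\<Sum>j\<in>{1..length \<beta>}. \<Sum>c\<in>compositions (length \<beta> - j).
      Poly_Mapping.single (sum_list (take j \<beta>) # block_sums c (drop j \<beta>)) 1)"
    by (subst sum.Sigma) (auto simp: finite_compositions intro!: sum.cong)
  also have "\<dots> = (\<Sum>j\<in>{1..length \<beta>}. pm_cons (sum_list (take j \<beta>)) (coarsenings (drop j \<beta>)))"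
    by (simp add: coarsenings_def pm_cons_sum)
  finally show ?thesis .
qed

lemma coarsenings_rev_last_block:
  assumes "\<gamma> \<noteq> []"
  shows "(coarsenings (rev \<gamma>) :: nat list \<Rightarrow>\<^sub>0 'k::comm_ring_1) =
    (\<Sum>m<length \<gamma>. pm_cons (sum_list (drop m \<gamma>)) (coarsenings (rev (take m \<gamma>))))"
proof -
  let ?n = "length \<gamma>"
  have "(coarsenings (rev \<gamma>) :: nat list \<Rightarrow>\<^sub>0 'k) =
      (\<Sum>j\<in>{1..?n}. pm_cons (sum_list (take j (rev \<gamma>))) (coarsenings (drop j (rev \<gamma>))))"
    using coarsenings_Cons_blocks[of "rev \<gamma>"] assms by simp
  also have "\<dots> = (\<Sum>j\<in>{1..?n}. pm_cons (sum_list (drop (?n - j) \<gamma>)) (coarsenings (rev (take (?n - j) \<gamma>))))"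
  proof (intro sum.cong refl)
    fix j assume "j \<in> {1..?n}"
    then have "take j (rev \<gamma>) = rev (drop (?n - j) \<gamma>)" "drop j (rev \<gamma>) = rev (take (?n - j) \<gamma>)"
      using rev_drop[of "?n - j" \<gamma>] rev_take[of "?n - j" \<gamma>] by auto
    then show "pm_cons (sum_list (take j (rev \<gamma>))) (coarsenings (drop j (rev \<gamma>))) =
        (pm_cons (sum_list (drop (?n - j) \<gamma>)) (coarsenings (rev (take (?n - j) \<gamma>))) :: nat list \<Rightarrow>\<^sub>0 'k)"
      by simp
  qed
  also have "\<dots> = (\<Sum>m<?n. pm_cons (sum_list (drop m \<gamma>)) (coarsenings (rev (take m \<gamma>))))"
    by (rule sum.reindex_bij_witness[of _ "\<lambda>m. ?n - m" "\<lambda>j. ?n - j"]) auto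
  finally show ?thesis .
qed

lemma coarsenings_rev_take:
  assumes "0 < i" and "i \<le> length \<alpha>"
  shows "(coarsenings (rev (take i \<alpha>)) :: nat list \<Rightarrow>\<^sub>0 'k::comm_ring_1) =
    (\<Sum>j<i. pm_cons (sum_list (drop j (take i \<alpha>))) (coarsenings (rev (take j \<alpha>))))"
proof -
  have "take i \<alpha> \<noteq> []"
    using assms by auto
  then have "(coarsenings (rev (take i \<alpha>)) :: nat list \<Rightarrow>\<^sub>0 'k) = (\<Sum>j<length (take i \<alpha>).
      pm_cons (sum_list (drop j (take i \<alpha>))) (coarsenings (rev (take j (take i \<alpha>)))))"
    by (rule coarsenings_rev_last_block)
  also have "\<dots> = (\<Sum>j<i. pm_cons (sum_list (drop j (take i \<alpha>))) (coarsenings (rev (take j \<alpha>))))"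
    using assms by (intro sum.cong) (auto simp: min_def)
  finally show ?thesis .
qed

lemma pm_rev_coarsenings: "pm_rev (coarsenings \<beta>) = coarsenings (rev \<beta>)"
proof -
  have "pm_rev (coarsenings \<beta>) =
      (\<Sum>c\<in>compositions (length \<beta>). Poly_Mapping.single (block_sums (rev c) (rev \<beta>)) 1)"
    unfolding coarsenings_def pm_rev_sum
    by (intro sum.cong refl) (simp add: rev_block_sums compositions_def)
  also have "\<dots> = (\<Sum>c\<in>rev ` compositions (length \<beta>). Poly_Mapping.single (block_sums c (rev \<beta>)) 1)"
    by (subst sum.reindex) (auto simp: o_def)
  finally show ?thesis
    by (simp add: compositions_rev coarsenings_def)
qed

lemma mshuffle_single:
  "mshuffle (Poly_Mapping.single x c) (Poly_Mapping.single y d) = pm_smult (c * d) (mset_pm (msh x y))"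
  by (simp add: mshuffle_def bilin_lin)

lemma mshuffle_lin_left: "mshuffle X Y = lin (\<lambda>x. mshuffle (Poly_Mapping.single x 1) Y) X"
  by (simp add: mshuffle_def bilin_lin)

lemma mshuffle_lin_right: "mshuffle X Y = lin (\<lambda>y. mshuffle X (Poly_Mapping.single y 1)) Y"
  by (simp add: mshuffle_def bilin_lin lin_comp) (rule lin_swap)

lemma mshuffle_sum_left: "mshuffle (sum f A) Y = (\<Sum>a\<in>A. mshuffle (f a) Y)"
  by (simp add: mshuffle_def bilin_lin lin_sum)

lemma mshuffle_Nil_left [simp]: "mshuffle (Poly_Mapping.single [] 1) Y = Y"
  by (simp add: mshuffle_def bilin_lin msh_Nil_left_fun)

lemma mshuffle_Nil_right [simp]: "mshuffle X (Poly_Mapping.single [] 1) = X"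
  by (simp add: mshuffle_def bilin_lin)

lemma mshuffle_commute: "mshuffle X Y = mshuffle Y X"
  unfolding mshuffle_def bilin_lin by (subst lin_swap) (simp add: msh_commute)

lemma pm_rev_mshuffle: "pm_rev (mshuffle X Y) = mshuffle (pm_rev X) (pm_rev Y)"
proof -
  have "pm_rev (mshuffle X Y) = lin (\<lambda>x. lin (\<lambda>y. pm_rev (mset_pm (msh x y))) Y) X"
    by (simp add: mshuffle_def bilin_lin pm_rev_def lin_comp)
  also have "\<dots> = lin (\<lambda>x. lin (\<lambda>y. mset_pm (msh (rev x) (rev y))) Y) X"
    by (simp add: pm_rev_mset_pm msh_rev)
  also have "\<dots> = mshuffle (pm_rev X) (pm_rev Y)"
    by (simp add: mshuffle_def bilin_lin pm_rev_def lin_comp)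
  finally show ?thesis .
qed

lemma mshuffle_pm_cons:
  "mshuffle (pm_cons s X) (pm_cons t Y) =
     pm_cons s (mshuffle X (pm_cons t Y)) + pm_cons t (mshuffle (pm_cons s X) Y) + pm_cons (s + t) (mshuffle X Y)"
proof -
  have cons_lin: "pm_cons s Z = lin (\<lambda>z. pm_cons s (Poly_Mapping.single z 1)) Z" for s Z
    by (simp add: pm_cons_def)
  have left: "mshuffle (pm_cons s X) Z = lin (\<lambda>x. mshuffle (pm_cons s (Poly_Mapping.single x 1)) Z) X" for Z
    by (subst mshuffle_lin_left, subst cons_lin, simp add: lin_comp, (subst mshuffle_lin_left, simp)?)
  have right: "mshuffle Z (pm_cons t Y) = lin (\<lambda>y. mshuffle Z (pm_cons t (Poly_Mapping.single y 1))) Y" for Z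
    by (subst mshuffle_lin_right, subst cons_lin, simp add: lin_comp, (subst mshuffle_lin_right, simp)?)
  show ?thesis
    apply (simp only: left[of "pm_cons t Y"] left[of Y] mshuffle_lin_left[of X] pm_cons_lin
        lin_fun_add[symmetric])
    apply (rule lin_cong)
    apply (simp only: right mshuffle_lin_right[of _ Y] pm_cons_lin lin_fun_add[symmetric])
    apply (rule lin_cong)
    apply (simp add: mshuffle_single pm_cons_mset_pm)
    done
qed

text \<open>In the \<open>i\<close>-th term of the left antipode sum, the words whose first letter is the first
  block of a coarsening alone; they cancel against the terms of the \<open>(i-1)\<close>-th summand whose
  first letter merges that block with the letter \<open>\<alpha> ! (i - 1)\<close>.\<close>

definition leading_block_terms :: "nat list \<Rightarrow> nat \<Rightarrow> (nat list \<Rightarrow>\<^sub>0 'k::comm_ring_1)" where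
  "leading_block_terms \<alpha> i = (if i \<le> length \<alpha> then
     (\<Sum>j<i. pm_cons (sum_list (drop j (take i \<alpha>)))
       (mshuffle (coarsenings (rev (take j \<alpha>))) (Poly_Mapping.single (drop i \<alpha>) 1)))
   else 0)"

lemma mshuffle_coarsenings_split:
  assumes "\<alpha> \<noteq> []" and "i \<le> length \<alpha>"
  shows "(mshuffle (coarsenings (rev (take i \<alpha>))) (Poly_Mapping.single (drop i \<alpha>) 1) :: nat list \<Rightarrow>\<^sub>0 'k::comm_ring_1)
    = leading_block_terms \<alpha> i + leading_block_terms \<alpha> (Suc i)"
proof -
  let ?H = "leading_block_terms \<alpha> :: nat \<Rightarrow> nat list \<Rightarrow>\<^sub>0 'k"
  let ?B = "\<lambda>j i. mshuffle (coarsenings (rev (take j \<alpha>))) (Poly_Mapping.single (drop i \<alpha>) 1) :: nat list \<Rightarrow>\<^sub>0 'k"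
  let ?\<sigma> = "\<lambda>j i. sum_list (drop j (take i \<alpha>))"
  consider "i = 0" | "i = length \<alpha>" | "0 < i" "i < length \<alpha>"
    using assms(2) by linarith
  then show ?thesis
  proof cases
    case 1
    then show ?thesis
      using assms(1) by (cases \<alpha>) (simp_all add: leading_block_terms_def)
  next
    case 2
    then show ?thesis
      using assms(1) coarsenings_rev_take[of "length \<alpha>" \<alpha>] by (simp add: leading_block_terms_def)
  next
    case 3
    have drop_i: "Poly_Mapping.single (drop i \<alpha>) (1::'k) = pm_cons (\<alpha> ! i) (Poly_Mapping.single (drop (Suc i) \<alpha>) 1)"
      using 3 by (simp add: Cons_nth_drop_Suc)
    have \<sigma>_Suc: "?\<sigma> j i + \<alpha> ! i = ?\<sigma> j (Suc i)" if "j < i" for j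
      using that 3 by (simp add: take_Suc_conv_app_nth)
    have \<sigma>_last: "?\<sigma> i (Suc i) = \<alpha> ! i"
      using 3 by (simp add: take_Suc_conv_app_nth)
    have take_i: "coarsenings (rev (take i \<alpha>)) = (\<Sum>j<i. pm_cons (?\<sigma> j i) (coarsenings (rev (take j \<alpha>))))"
      using 3 by (intro coarsenings_rev_take) auto
    have "?B i i = mshuffle (\<Sum>j<i. pm_cons (?\<sigma> j i) (coarsenings (rev (take j \<alpha>))))
        (pm_cons (\<alpha> ! i) (Poly_Mapping.single (drop (Suc i) \<alpha>) 1))"
      unfolding take_i drop_i ..
    also have "\<dots> = (\<Sum>j<i. pm_cons (?\<sigma> j i) (?B j i)) +
        pm_cons (\<alpha> ! i) (mshuffle (\<Sum>j<i. pm_cons (?\<sigma> j i) (coarsenings (rev (take j \<alpha>))))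
          (Poly_Mapping.single (drop (Suc i) \<alpha>) 1)) +
        (\<Sum>j<i. pm_cons (?\<sigma> j (Suc i)) (?B j (Suc i)))"
      by (simp only: mshuffle_sum_left mshuffle_pm_cons sum.distrib)
        (use 3 in \<open>simp add: pm_cons_sum \<sigma>_Suc Cons_nth_drop_Suc\<close>)
    also have "\<dots> = ?H i + ?H (Suc i)"
      using 3 by (simp add: leading_block_terms_def take_i \<sigma>_last add_ac)
    finally show ?thesis .
  qed
qed

lemma alternating_mshuffle_coarsenings_left:
  "(\<Sum>i\<in>{0..length \<alpha>}. pm_smult ((-1) ^ i)
      (mshuffle (coarsenings (rev (take i \<alpha>))) (Poly_Mapping.single (drop i \<alpha>) 1))) =
   (if \<alpha> = [] then Poly_Mapping.single [] 1 else (0 :: nat list \<Rightarrow>\<^sub>0 'k::comm_ring_1))"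
proof (cases "\<alpha> = []")
  case False
  have "(\<Sum>i\<in>{0..length \<alpha>}. pm_smult ((-1) ^ i)
      (mshuffle (coarsenings (rev (take i \<alpha>))) (Poly_Mapping.single (drop i \<alpha>) 1))) =
      (\<Sum>i\<in>{0..length \<alpha>}. pm_smult ((-1) ^ i)
        (leading_block_terms \<alpha> i + (leading_block_terms \<alpha> (Suc i) :: nat list \<Rightarrow>\<^sub>0 'k)))"
    using False by (intro sum.cong refl) (simp add: mshuffle_coarsenings_split)
  also have "\<dots> = 0"
    by (simp only: sum_alternating_telescope) (simp add: leading_block_terms_def)
  finally show ?thesis
    using False by simp
qed simp

lemma alternating_mshuffle_coarsenings_right:
  "(\<Sum>i\<in>{0..length \<alpha>}. pm_smult ((-1) ^ (length \<alpha> - i))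
      (mshuffle (Poly_Mapping.single (take i \<alpha>) 1) (coarsenings (rev (drop i \<alpha>))))) =
   (if \<alpha> = [] then Poly_Mapping.single [] 1 else (0 :: nat list \<Rightarrow>\<^sub>0 'k::comm_ring_1))"
    (is "?R = _")
proof -
  let ?k = "length \<alpha>"
  have "pm_rev ?R = (\<Sum>i\<in>{0..?k}. pm_smult ((-1) ^ (?k - i))
      (mshuffle (coarsenings (rev (take (?k - i) (rev \<alpha>)))) (Poly_Mapping.single (drop (?k - i) (rev \<alpha>)) 1)))"
    unfolding pm_rev_sum pm_rev_smult pm_rev_mshuffle
  proof (intro sum.cong refl)
    fix i assume "i \<in> {0..?k}"
    then have "rev (take i \<alpha>) = drop (?k - i) (rev \<alpha>)" "drop i \<alpha> = rev (take (?k - i) (rev \<alpha>))"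
      by (simp_all add: rev_take)
    then show "pm_smult ((-1) ^ (?k - i)) (mshuffle (pm_rev (Poly_Mapping.single (take i \<alpha>) 1))
        (pm_rev (coarsenings (rev (drop i \<alpha>))))) =
      (pm_smult ((-1) ^ (?k - i)) (mshuffle (coarsenings (rev (take (?k - i) (rev \<alpha>))))
        (Poly_Mapping.single (drop (?k - i) (rev \<alpha>)) 1)) :: nat list \<Rightarrow>\<^sub>0 'k)"
      by (simp add: pm_rev_coarsenings mshuffle_commute)
  qed
  also have "\<dots> = (\<Sum>i\<in>{0..length (rev \<alpha>)}. pm_smult ((-1) ^ i)
      (mshuffle (coarsenings (rev (take i (rev \<alpha>)))) (Poly_Mapping.single (drop i (rev \<alpha>)) 1)))"
    by (rule sum.reindex_bij_witness[of _ "\<lambda>j. ?k - j" "\<lambda>i. ?k - i"]) auto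
  also have "\<dots> = (if rev \<alpha> = [] then Poly_Mapping.single [] 1 else 0)"
    by (rule alternating_mshuffle_coarsenings_left)
  finally have rev_R: "pm_rev ?R = (if \<alpha> = [] then Poly_Mapping.single [] 1 else 0)"
    by simp
  have "?R = pm_rev (pm_rev ?R)"
    by simp
  also have "\<dots> = (if \<alpha> = [] then Poly_Mapping.single [] 1 else 0)"
    unfolding rev_R by (cases "\<alpha> = []") (simp_all add: pm_rev_def)
  finally show ?thesis .
qed

section \<open>The Hopf algebra structure of Sha(x)\<close>

definition sha_embed :: "nat \<Rightarrow> (nat list \<Rightarrow>\<^sub>0 'k::comm_ring_1) \<Rightarrow> (sha_word \<Rightarrow>\<^sub>0 'k)" where
  "sha_embed a X = lin (\<lambda>\<gamma>. Poly_Mapping.single (a, \<gamma>) 1) X"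

lemma sha_embed_single [simp]: "sha_embed a (Poly_Mapping.single \<gamma> c) = Poly_Mapping.single (a, \<gamma>) c"
  by (simp add: sha_embed_def)

lemma sha_embed_zero [simp]: "sha_embed a 0 = 0"
  by (simp add: sha_embed_def)

lemma sha_embed_sum: "sha_embed a (sum f A) = (\<Sum>x\<in>A. sha_embed a (f x))"
  by (simp add: sha_embed_def lin_sum)

lemma sha_embed_smult: "sha_embed a (pm_smult c X) = pm_smult c (sha_embed a X)"
  by (simp add: sha_embed_def lin_smult)

lemma sha_embed_lin: "sha_embed a (lin F X) = lin (\<lambda>x. sha_embed a (F x)) X"
  by (simp add: sha_embed_def lin_comp)

lemma sha_embed_mset_pm: "sha_embed a (mset_pm N) = mset_pm (image_mset (Pair a) N)"
  unfolding sha_embed_def lin_mset_pm by (simp add: mset_pm_conv_sum_mset image_mset.compositionality o_def)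

lemma sha_mult_basis_Pair:
  "sha_mult_basis (a, x) (b, y) = mset_pm (image_mset (Pair (a + b)) (msh x y))"
  by (simp add: sha_mult_basis_def)

lemma sha_mult_basis_eq_embed: "sha_mult_basis (a, x) (b, y) = sha_embed (a + b) (mset_pm (msh x y))"
  by (simp add: sha_mult_basis_Pair sha_embed_mset_pm)

lemma sha_mult_embed: "sha_embed p X \<diamondop> sha_embed q Y = sha_embed (p + q) (mshuffle X Y)"
proof -
  have "sha_embed p X \<diamondop> sha_embed q Y = lin (\<lambda>x. lin (\<lambda>y. sha_mult_basis (p, x) (q, y)) Y) X"
    by (simp add: sha_mult_def bilin_lin sha_embed_def lin_comp)
  also have "\<dots> = sha_embed (p + q) (mshuffle X Y)"
    by (simp add: sha_mult_basis_eq_embed mshuffle_def bilin_lin sha_embed_lin)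
  finally show ?thesis .
qed

lemma sha_mult_embed_single:
  "sha_embed p X \<diamondop> Poly_Mapping.single (q, y) c = sha_embed (p + q) (mshuffle X (Poly_Mapping.single y c))"
  using sha_mult_embed[of p X q "Poly_Mapping.single y c"] by simp

lemma single_sha_mult_embed:
  "Poly_Mapping.single (p, x) c \<diamondop> sha_embed q Y = sha_embed (p + q) (mshuffle (Poly_Mapping.single x c) Y)"
  using sha_mult_embed[of p "Poly_Mapping.single x c" q Y] by simp

lemma sha_mult_smult_left: "pm_smult c f \<diamondop> g = pm_smult c (f \<diamondop> g)"
  by (simp add: sha_mult_def bilin_smult_left)

lemma sha_mult_smult_right: "f \<diamondop> pm_smult c g = pm_smult c (f \<diamondop> g)"
  by (simp add: sha_mult_def bilin_smult_right)

lemma sha_mult_assoc: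
  fixes f g h :: "sha_word \<Rightarrow>\<^sub>0 'k::comm_ring_1"
  shows "(f \<diamondop> g) \<diamondop> h = f \<diamondop> (g \<diamondop> h)"
  unfolding sha_mult_def
proof (rule bilin_assoc_of_basis)
  fix u v t :: sha_word
  obtain a x b y c z where uvt: "u = (a, x)" "v = (b, y)" "t = (c, z)"
    by (metis surj_pair)
  have "lin (\<lambda>w. sha_mult_basis w t) (sha_mult_basis u v) =
      mset_pm (image_mset (Pair (a + b + c)) (mbind (msh x y) (\<lambda>\<gamma>. msh \<gamma> z)))"
    unfolding uvt sha_mult_basis_Pair
    by (simp add: lin_mset_pm sha_mult_basis_Pair image_mset.compositionality o_def
        mset_pm_mbind[symmetric] image_mbind)
  also have "\<dots> = mset_pm (image_mset (Pair (a + (b + c))) (mbind (msh y z) (msh x)))"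
    by (simp add: msh_assoc add.assoc)
  also have "\<dots> = (lin (sha_mult_basis u) (sha_mult_basis v t) :: sha_word \<Rightarrow>\<^sub>0 'k)"
    unfolding uvt sha_mult_basis_Pair
    by (simp add: lin_mset_pm sha_mult_basis_Pair image_mset.compositionality o_def
        mset_pm_mbind[symmetric] image_mbind)
  finally show "lin (\<lambda>w. sha_mult_basis w t) (sha_mult_basis u v) =
      (lin (sha_mult_basis u) (sha_mult_basis v t) :: sha_word \<Rightarrow>\<^sub>0 'k)" .
qed

lemma sha_mult_unit_left [simp]:
  fixes f :: "sha_word \<Rightarrow>\<^sub>0 'k::comm_ring_1"
  shows "sha_unit 1 \<diamondop> f = f"
proof -
  have "sha_mult_basis (0, []) = (\<lambda>v. Poly_Mapping.single v (1::'k))"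
    by (rule ext) (auto simp: sha_mult_basis_Pair)
  then show ?thesis
    by (simp add: sha_mult_def sha_unit_def bilin_lin)
qed

lemma sha_mult_unit_right [simp]:
  fixes f :: "sha_word \<Rightarrow>\<^sub>0 'k::comm_ring_1"
  shows "f \<diamondop> sha_unit 1 = f"
proof -
  have "sha_mult_basis u (0, []) = Poly_Mapping.single u (1::'k)" for u
    by (cases u) (simp add: sha_mult_basis_Pair)
  then show ?thesis
    by (simp add: sha_mult_def sha_unit_def bilin_lin)
qed

lemma sha_coprod_basis_Pair:
  "sha_coprod_basis (a, \<alpha>) = (\<Sum>i\<in>{0..length \<alpha>}. \<Sum>p\<in>{0..a}.
     Poly_Mapping.single ((p, take i \<alpha>), (a - p, drop i \<alpha>)) (of_nat (a choose p)))"
  by (simp add: sha_coprod_basis_def)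

lemma sha_coprod_basis_coassoc:
  "assoc_iso (tmap sha_coprod_basis (\<lambda>w. Poly_Mapping.single w 1) (sha_coprod_basis w)) =
   (tmap (\<lambda>w. Poly_Mapping.single w 1) sha_coprod_basis (sha_coprod_basis w) :: _ \<Rightarrow>\<^sub>0 'k::comm_ring_1)"
proof -
  obtain a \<alpha> where w: "w = (a, \<alpha>)"
    by force
  let ?k = "length \<alpha>"
  define T :: "nat \<Rightarrow> nat \<Rightarrow> nat \<Rightarrow> nat \<Rightarrow> _ \<Rightarrow>\<^sub>0 'k" where
    "T i p j q = Poly_Mapping.single ((q, take j \<alpha>), ((p - q, take (i - j) (drop j \<alpha>)), (a - p, drop i \<alpha>)))
      (of_nat ((a choose p) * (p choose q)))" for i p j q
  have "assoc_iso (tmap sha_coprod_basis (\<lambda>w. Poly_Mapping.single w 1) (sha_coprod_basis w)) =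
      (\<Sum>i\<in>{0..?k}. \<Sum>p\<in>{0..a}. \<Sum>j\<in>{0..i}. \<Sum>q\<in>{0..p}. T i p j q)"
    unfolding w sha_coprod_basis_Pair
    by (simp add: tmap_def lin_sum tens_single_right pm_smult_sum_right assoc_iso_def
        sha_coprod_basis_Pair T_def, intro sum.cong refl) (auto simp: min_def drop_take)
  also have "\<dots> = (\<Sum>j\<in>{0..?k}. \<Sum>q\<in>{0..a}. \<Sum>i\<in>{0..?k - j}. \<Sum>r\<in>{0..a - q}. T (j + i) (q + r) j q)"
    by (rule sum_nested_triangle2)
  also have "\<dots> = (\<Sum>j\<in>{0..?k}. \<Sum>q\<in>{0..a}. \<Sum>i\<in>{0..?k - j}. \<Sum>r\<in>{0..a - q}.
      Poly_Mapping.single ((q, take j \<alpha>), ((r, take i (drop j \<alpha>)), (a - q - r, drop i (drop j \<alpha>))))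
      (of_nat ((a choose q) * ((a - q) choose r))))"
  proof (intro sum.cong refl)
    fix j q i r assume "q \<in> {0..a}" "r \<in> {0..a - q}"
    then have "(a choose (q + r)) * ((q + r) choose q) = (a choose q) * ((a - q) choose r)"
      using choose_mult[of q "q + r" a] by simp
    then show "T (j + i) (q + r) j q =
        Poly_Mapping.single ((q, take j \<alpha>), ((r, take i (drop j \<alpha>)), (a - q - r, drop i (drop j \<alpha>))))
        (of_nat ((a choose q) * ((a - q) choose r)))"
      by (simp add: T_def add.commute)
  qed
  also have "\<dots> = tmap (\<lambda>w. Poly_Mapping.single w 1) sha_coprod_basis (sha_coprod_basis w)"
    unfolding w sha_coprod_basis_Pair
    by (simp add: tmap_def lin_sum tens_single_left pm_smult_sum_right sha_coprod_basis_Pair)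
  finally show ?thesis .
qed

lemma sha_coprod_coassoc:
  fixes f :: "sha_word \<Rightarrow>\<^sub>0 'k::comm_ring_1"
  shows "assoc_iso (tmap sha_coprod_basis (\<lambda>w. Poly_Mapping.single w 1) (sha_coprod f)) =
    tmap (\<lambda>w. Poly_Mapping.single w 1) sha_coprod_basis (sha_coprod f)"
  by (simp add: sha_coprod_def tmap_lin assoc_iso_lin sha_coprod_basis_coassoc)

lemma sha_counit_left:
  fixes f :: "sha_word \<Rightarrow>\<^sub>0 'k::comm_ring_1"
  shows "lin (\<lambda>(v, w). pm_smult (sha_counit_basis v) (Poly_Mapping.single w 1)) (sha_coprod f) = f"
proof -
  have "lin (\<lambda>(v, w). pm_smult (sha_counit_basis v) (Poly_Mapping.single w 1)) (sha_coprod_basis u) =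
      (Poly_Mapping.single u 1 :: _ \<Rightarrow>\<^sub>0 'k)" for u
  proof -
    obtain a \<alpha> where u: "u = (a, \<alpha>)"
      by force
    have "lin (\<lambda>(v, w). pm_smult (sha_counit_basis v) (Poly_Mapping.single w 1)) (sha_coprod_basis u) =
        (\<Sum>i\<in>{0..length \<alpha>}. \<Sum>p\<in>{0..a}.
          if i = 0 then if p = 0 then Poly_Mapping.single u 1 else 0 else (0 :: _ \<Rightarrow>\<^sub>0 'k))"
      unfolding u sha_coprod_basis_Pair
      by (auto simp: lin_sum sha_counit_basis_def intro!: sum.cong)
    also have "\<dots> = (\<Sum>i\<in>{0..length \<alpha>}.
        if i = 0 then (\<Sum>p\<in>{0..a}. if p = 0 then Poly_Mapping.single u 1 else 0) else 0)"
      by (rule sum.cong) auto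
    finally show ?thesis
      by simp
  qed
  then show ?thesis
    by (simp add: sha_coprod_def lin_comp)
qed

lemma sha_counit_right:
  fixes f :: "sha_word \<Rightarrow>\<^sub>0 'k::comm_ring_1"
  shows "lin (\<lambda>(v, w). pm_smult (sha_counit_basis w) (Poly_Mapping.single v 1)) (sha_coprod f) = f"
proof -
  have "lin (\<lambda>(v, w). pm_smult (sha_counit_basis w) (Poly_Mapping.single v 1)) (sha_coprod_basis u) =
      (Poly_Mapping.single u 1 :: _ \<Rightarrow>\<^sub>0 'k)" for u
  proof -
    obtain a \<alpha> where u: "u = (a, \<alpha>)"
      by force
    have "lin (\<lambda>(v, w). pm_smult (sha_counit_basis w) (Poly_Mapping.single v 1)) (sha_coprod_basis u) =
        (\<Sum>i\<in>{0..length \<alpha>}. \<Sum>p\<in>{0..a}.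
          if i = length \<alpha> then if p = a then Poly_Mapping.single u 1 else 0 else (0 :: _ \<Rightarrow>\<^sub>0 'k))"
      unfolding u sha_coprod_basis_Pair
      by (auto simp: lin_sum sha_counit_basis_def intro!: sum.cong)
    also have "\<dots> = (\<Sum>i\<in>{0..length \<alpha>}.
        if i = length \<alpha> then (\<Sum>p\<in>{0..a}. if p = a then Poly_Mapping.single u 1 else 0) else 0)"
      by (rule sum.cong) auto
    finally show ?thesis
      by simp
  qed
  then show ?thesis
    by (simp add: sha_coprod_def lin_comp)
qed

lemma sha_coprod_basis_deconcat:
  "(sha_coprod_basis (s, \<gamma>) :: _ \<Rightarrow>\<^sub>0 'k::comm_ring_1) = (\<Sum>t\<in>{0..s}. pm_smult (of_nat (s choose t))
     (mset_pm (image_mset (\<lambda>(\<gamma>\<^sub>1, \<gamma>\<^sub>2). ((t, \<gamma>\<^sub>1), (s - t, \<gamma>\<^sub>2))) (deconcat \<gamma>))))"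
  unfolding sha_coprod_basis_Pair deconcat_def
  by (subst sum.swap) (simp add: image_mset_sum mset_pm_sum pm_smult_sum_right)

lemma sha_coprod_basis_mult:
  "lin sha_coprod_basis (sha_mult_basis u v) =
   (bilin (tens_mult_basis sha_mult_basis) (sha_coprod_basis u) (sha_coprod_basis v) :: _ \<Rightarrow>\<^sub>0 'k::comm_ring_1)"
proof -
  obtain a x b y where uv: "u = (a, x)" "v = (b, y)"
    by (metis surj_pair)
  define h where "h s = (\<lambda>(\<gamma>\<^sub>1 :: nat list, \<gamma>\<^sub>2 :: nat list). ((s :: nat, \<gamma>\<^sub>1), (a + b - s, \<gamma>\<^sub>2)))" for s
  define G :: "nat \<Rightarrow> _ \<Rightarrow>\<^sub>0 'k" where
    "G s = mset_pm (image_mset (h s) (\<Sum>i\<in>{0..length x}. \<Sum>j\<in>{0..length y}. msh_split x y i j))" for s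
  have "lin sha_coprod_basis (sha_mult_basis u v) =
      (\<Sum>t\<in>{0..a + b}. pm_smult (of_nat ((a + b) choose t)) (mset_pm (image_mset (h t) (mbind (msh x y) deconcat))))"
    unfolding uv sha_mult_basis_Pair
    by (simp add: lin_mset_pm image_mset.compositionality o_def sha_coprod_basis_deconcat sum_mset_image_sum
        sum_mset_image_pm_smult mset_pm_mbind[symmetric] image_mbind h_def)
  also have "\<dots> = (\<Sum>t\<in>{0..a + b}. pm_smult (of_nat ((a + b) choose t)) (G t))"
    by (simp add: G_def mbind_msh_deconcat)
  also have "\<dots> = (\<Sum>p\<in>{0..a}. \<Sum>q\<in>{0..b}. pm_smult (of_nat ((a choose p) * (b choose q))) (G (p + q)))"
    by (rule sum_binomial_convolution[symmetric])
  also have "\<dots> = (\<Sum>p\<in>{0..a}. \<Sum>q\<in>{0..b}. \<Sum>i\<in>{0..length x}. \<Sum>j\<in>{0..length y}.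
       pm_smult (of_nat ((a choose p) * (b choose q)))
         (mset_pm (image_mset (map_prod (Pair (p + q)) (Pair (a - p + (b - q)))) (msh_split x y i j))))"
    by (intro sum.cong refl)
      (auto simp: G_def image_mset_sum mset_pm_sum pm_smult_sum_right h_def
        intro!: sum.cong arg_cong[where f = "\<lambda>z. pm_smult _ (mset_pm z)"] image_mset_cong)
  also have "\<dots> = (\<Sum>j\<in>{0..length y}. \<Sum>q\<in>{0..b}. \<Sum>i\<in>{0..length x}. \<Sum>p\<in>{0..a}.
       pm_smult (of_nat ((a choose p) * (b choose q)))
         (mset_pm (image_mset (map_prod (Pair (p + q)) (Pair (a - p + (b - q)))) (msh_split x y i j))))"
    by (rule sum_swap4)
  also have "\<dots> = bilin (tens_mult_basis sha_mult_basis) (sha_coprod_basis u) (sha_coprod_basis v)"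
    unfolding uv sha_coprod_basis_Pair
    by (simp add: bilin_lin lin_sum pm_smult_sum_right tens_mult_basis_def sha_mult_basis_Pair
        tens_mset_pm mprod_image lin_fun_sum msh_split_def)
  finally show ?thesis .
qed

lemma sha_coprod_mult:
  fixes f g :: "sha_word \<Rightarrow>\<^sub>0 'k::comm_ring_1"
  shows "sha_coprod (f \<diamondop> g) = bilin (tens_mult_basis sha_mult_basis) (sha_coprod f) (sha_coprod g)"
  unfolding sha_coprod_def sha_mult_def by (rule lin_bilin_of_basis) (rule sha_coprod_basis_mult)

lemma sha_coprod_unit: "sha_coprod (sha_unit 1) = tens (sha_unit 1) (sha_unit (1::'k::comm_ring_1))"
  by (simp add: sha_coprod_def sha_unit_def sha_coprod_basis_Pair tens_single_left)

lemma sha_counit_eq_lin_form: "sha_counit = lin_form sha_counit_basis"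
  by (rule ext) (simp add: sha_counit_def lin_form_def)

lemma sha_counit_mult:
  fixes f g :: "sha_word \<Rightarrow>\<^sub>0 'k::comm_ring_1"
  shows "sha_counit (f \<diamondop> g) = sha_counit f * sha_counit g"
  unfolding sha_counit_eq_lin_form sha_mult_def
proof (rule lin_form_bilin_of_basis)
  fix u v :: sha_word
  obtain a x b y where uv: "u = (a, x)" "v = (b, y)"
    by (metis surj_pair)
  show "lin_form sha_counit_basis (sha_mult_basis u v :: _ \<Rightarrow>\<^sub>0 'k) = sha_counit_basis u * sha_counit_basis v"
  proof (cases "x = [] \<and> y = []")
    case True
    then show ?thesis
      by (simp add: uv sha_mult_basis_Pair lin_form_mset_pm sha_counit_basis_def)
  next
    case False
    then have "image_mset (\<lambda>\<gamma>. sha_counit_basis (a + b, \<gamma>)) (msh x y) = image_mset (\<lambda>_. 0 :: 'k) (msh x y)"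
      by (intro image_mset_cong) (auto simp: sha_counit_basis_def Nil_in_msh_iff)
    with False show ?thesis
      by (simp add: uv sha_mult_basis_Pair lin_form_mset_pm sha_counit_basis_def image_mset.compositionality o_def)
  qed
qed

lemma sha_counit_unit: "sha_counit (sha_unit 1) = (1::'k::comm_ring_1)"
  by (simp add: sha_counit_eq_lin_form sha_unit_def sha_counit_basis_def)

lemma sha_antipode_basis_eq_embed:
  "(sha_antipode_basis (p, \<beta>) :: _ \<Rightarrow>\<^sub>0 'k::comm_ring_1) =
   pm_smult ((-1) ^ (p + length \<beta>)) (sha_embed p (coarsenings (rev \<beta>)))"
  by (simp add: sha_antipode_basis_def coarsenings_def sha_embed_sum)

lemma sha_antipode_left:
  fixes f :: "sha_word \<Rightarrow>\<^sub>0 'k::comm_ring_1"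
  shows "lin (\<lambda>(v, w). sha_antipode_basis v \<diamondop> Poly_Mapping.single w 1) (sha_coprod f) =
    pm_smult (sha_counit f) (sha_unit 1)"
proof -
  have "lin (\<lambda>(v, w). sha_antipode_basis v \<diamondop> Poly_Mapping.single w 1) (sha_coprod_basis u) =
      pm_smult (sha_counit_basis u) (sha_unit (1::'k))" for u
  proof -
    obtain a \<alpha> where u: "u = (a, \<alpha>)"
      by force
    define Q :: "nat \<Rightarrow> _ \<Rightarrow>\<^sub>0 'k" where
      "Q i = mshuffle (coarsenings (rev (take i \<alpha>))) (Poly_Mapping.single (drop i \<alpha>) 1)" for i
    have "lin (\<lambda>(v, w). sha_antipode_basis v \<diamondop> Poly_Mapping.single w 1) (sha_coprod_basis u) =
        (\<Sum>i\<in>{0..length \<alpha>}. \<Sum>p\<in>{0..a}. pm_smult (of_nat (a choose p) * (-1) ^ p * (-1) ^ i) (sha_embed a (Q i)))"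
      unfolding u sha_coprod_basis_Pair
    proof (simp add: lin_sum, intro sum.cong refl)
      fix i p assume "i \<in> {0..length \<alpha>}" "p \<in> {0..a}"
      then show "pm_smult (of_nat (a choose p)) (sha_antipode_basis (p, take i \<alpha>)
            \<diamondop> Poly_Mapping.single (a - p, drop i \<alpha>) 1) =
          pm_smult (of_nat (a choose p) * (- 1) ^ p * (- 1) ^ i) (sha_embed a (Q i))"
        by (simp add: sha_antipode_basis_eq_embed sha_mult_smult_left sha_mult_embed_single Q_def
            power_add mult.assoc)
    qed
    also have "\<dots> = sha_embed a (pm_smult (\<Sum>p\<in>{0..a}. of_nat (a choose p) * (-1) ^ p)
        (\<Sum>i\<in>{0..length \<alpha>}. pm_smult ((-1) ^ i) (Q i)))"
      by (simp add: sha_embed_sum sha_embed_smult pm_smult_sum_right pm_smult_sum_left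
          sum_distrib_left mult_ac)
    also have "\<dots> = pm_smult (sha_counit_basis u) (sha_unit (1::'k))"
      unfolding Q_def alternating_mshuffle_coarsenings_left sum_binomial_alternating
      by (simp add: u sha_counit_basis_def sha_unit_def)
    finally show ?thesis .
  qed
  then show ?thesis
    by (simp add: sha_coprod_def lin_comp sha_counit_eq_lin_form pm_smult_lin_form)
qed

lemma sha_antipode_right:
  fixes f :: "sha_word \<Rightarrow>\<^sub>0 'k::comm_ring_1"
  shows "lin (\<lambda>(v, w). Poly_Mapping.single v 1 \<diamondop> sha_antipode_basis w) (sha_coprod f) =
    pm_smult (sha_counit f) (sha_unit 1)"
proof -
  have "lin (\<lambda>(v, w). Poly_Mapping.single v 1 \<diamondop> sha_antipode_basis w) (sha_coprod_basis u) =
      pm_smult (sha_counit_basis u) (sha_unit (1::'k))" for u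
  proof -
    obtain a \<alpha> where u: "u = (a, \<alpha>)"
      by force
    define Q :: "nat \<Rightarrow> _ \<Rightarrow>\<^sub>0 'k" where
      "Q i = mshuffle (Poly_Mapping.single (take i \<alpha>) 1) (coarsenings (rev (drop i \<alpha>)))" for i
    have "lin (\<lambda>(v, w). Poly_Mapping.single v 1 \<diamondop> sha_antipode_basis w) (sha_coprod_basis u) =
        (\<Sum>i\<in>{0..length \<alpha>}. \<Sum>p\<in>{0..a}.
          pm_smult (of_nat (a choose p) * (-1) ^ (a - p) * (-1) ^ (length \<alpha> - i)) (sha_embed a (Q i)))"
      unfolding u sha_coprod_basis_Pair
    proof (simp add: lin_sum, intro sum.cong refl)
      fix i p assume "i \<in> {0..length \<alpha>}" "p \<in> {0..a}"
      moreover have "a - p + (length \<alpha> - i) = a + length \<alpha> - (p + i)"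
        using calculation by auto
      ultimately show "pm_smult (of_nat (a choose p)) (Poly_Mapping.single (p, take i \<alpha>) 1
            \<diamondop> sha_antipode_basis (a - p, drop i \<alpha>)) =
          pm_smult (of_nat (a choose p) * (- 1) ^ (a - p) * (- 1) ^ (length \<alpha> - i)) (sha_embed a (Q i))"
        by (simp add: sha_antipode_basis_eq_embed sha_mult_smult_right single_sha_mult_embed Q_def
            power_add[symmetric] mult.assoc)
    qed
    also have "\<dots> = sha_embed a (pm_smult (\<Sum>p\<in>{0..a}. of_nat (a choose p) * (-1) ^ (a - p))
        (\<Sum>i\<in>{0..length \<alpha>}. pm_smult ((-1) ^ (length \<alpha> - i)) (Q i)))"
      by (simp add: sha_embed_sum sha_embed_smult pm_smult_sum_right pm_smult_sum_left
          sum_distrib_left mult_ac)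
    also have "\<dots> = pm_smult (sha_counit_basis u) (sha_unit (1::'k))"
      unfolding Q_def alternating_mshuffle_coarsenings_right sum_binomial_alternating'
      by (simp add: u sha_counit_basis_def sha_unit_def)
    finally show ?thesis .
  qed
  then show ?thesis
    by (simp add: sha_coprod_def lin_comp sha_counit_eq_lin_form pm_smult_lin_form)
qed

theorem corollary4p6:
  assumes "\<And>n::nat. n > 0 \<Longrightarrow> \<exists>y::'k::comm_ring_1. of_nat n * y = 1"
  shows "is_hopf_algebra sha_mult_basis (sha_unit (1::'k))
           sha_coprod_basis sha_counit_basis sha_antipode_basis"
  unfolding is_hopf_algebra_def Let_def sha_mult_def[symmetric] sha_coprod_def[symmetric]
    sha_counit_def[symmetric]
  using sha_mult_assoc sha_mult_unit_left sha_mult_unit_right sha_coprod_coassoc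
    sha_counit_left sha_counit_right sha_coprod_mult sha_coprod_unit sha_counit_mult sha_counit_unit
    sha_antipode_left sha_antipode_right
  by auto

end
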